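(* Let $\mathcal{E}$ be an even Dirichlet form on $L^2(X,m)$ and let $\mathfrak{D}$ be its Dirichlet space. Assume that every $f\in\mathfrak{D}$ is quasi-continuous and let $p>2$. Then the following are equivalent: (i) for every $q\in[2,p)$ there exists $C>0$ such that $\|f\|_{L^q(X,m)}\le C\|f\|_{\mathfrak{D}}$ for every $f\in\mathfrak{D}$; (ii) for every $q\in[2,p)$ there exists $C>0$ such that $C\,\mathrm{Cap}(A)\ge m(A)^{1/q}$ for every measurable $A\subseteq X$.
   Context: Standing setting: $X$ is a Hausdorff topological space and $m$ is a Borel measure on $X$ with full support, i.e. no nonempty open subset of $X$ has $m$-measure zero. $L^2(X,m)$ is the real $L^2$ space. A Dirichlet form is a functional $\mathcal{E}:L^2(X,m)\to[0,\infty]$ that is convex, lower semicontinuous and densely defined (its effective domain $\mathrm{dom}(\mathcal{E})=\{u:\mathcal{E}(u)<\infty\}$ is dense in $L^2(X,m)$), and such that for all $u,v\in L^2(X,m)$ and $\alpha>0$: (1) $\mathcal{E}(u\wedge v)+\mathcal{E}(u\vee v)\le \mathcal{E}(u)+\mathcal{E}(v)$; (2) $\mathcal{E}\big(v+\tfrac12((u-v+\alpha)_+-(u-v-\alpha)_-)\big)+\mathcal{E}\big(u-\tfrac12((u-v+\alpha)_+-(u-v-\alpha)_-)\big)\le \mathcal{E}(u)+\mathcal{E}(v)$, where $(\cdot)_+$, $(\cdot)_-$ denote positive and negative parts. $\mathcal{E}$ is called even if $\mathcal{E}(0)=0$ and $\mathcal{E}(-u)=\mathcal{E}(u)$ for all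 $u$. Set $\mathcal{E}_1(u)=\|u\|_{L^2(X,m)}^2+\mathcal{E}(u)$. The Dirichlet space is $\mathfrak{D}=\{u\in L^2(X,m):\exists\lambda>0,\ \mathcal{E}_1(\lambda u)<\infty\}$ with the Minkowski norm $\|u\|_{\mathfrak{D}}=\inf\{\lambda>0:\mathcal{E}_1(u/\lambda)\le 1\}$. Capacity: for $A\subseteq X$ let $\mathcal{L}_A=\{u\in L^2(X,m): u\ge 1\ m\text{-a.e. on } U \text{ for some open } U\supseteq A\}$ and define the norm-capacity $\mathrm{Cap}(A)=\inf\{\|u\|_{\mathfrak{D}}: u\in\mathcal{L}_A\}$ (with $\|u\|_{\mathfrak{D}}=\infty$ for $u\notin\mathfrak{D}$, $\inf\emptyset=\infty$). A function $f:X\to\mathbb{R}$ is quasi-continuous if for every $\varepsilon>0$ there is an open set $O\subseteq X$ with $\mathrm{Cap}(O)\le\varepsilon$ such that $f|_{X\setminus O}$ is continuous. An element $f\in L^2(X,m)$ is called quasi-continuous if it has a quasi-continuous representative, and $f$ is then identified with that representative. *)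

theory Defs
  imports "HOL-Analysis.Analysis"
begin

text \<open>Elements of the real space L2(X,m) are represented by Borel measurable,
  square integrable functions; all notions below are invariant under a.e. equality.\<close>

definition L2 :: "'a measure \<Rightarrow> ('a \<Rightarrow> real) set" where
  "L2 M = {f. f \<in> borel_measurable M \<and> integrable M (\<lambda>x. (f x)\<^sup>2)}"

definition L2norm :: "'a measure \<Rightarrow> ('a \<Rightarrow> real) \<Rightarrow> real" where
  "L2norm M f = sqrt (integral\<^sup>L M (\<lambda>x. (f x)\<^sup>2))"

definition ennpow :: "ennreal \<Rightarrow> real \<Rightarrow> ennreal" where
  "ennpow x r = (if x = \<infinity> then \<infinity> else ennreal ((enn2real x) powr r))"

definition Lqnorm :: "'a measure \<Rightarrow> real \<Rightarrow> ('a \<Rightarrow> real) \<Rightarrow> ennreal" where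
  "Lqnorm M q f = ennpow (\<integral>\<^sup>+ x. ennreal (\<bar>f x\<bar> powr q) \<partial>M) (1 / q)"

definition pos_part :: "real \<Rightarrow> real" where "pos_part x = max x 0"
definition neg_part :: "real \<Rightarrow> real" where "neg_part x = max (- x) 0"

definition dirichlet_form :: "'a measure \<Rightarrow> (('a \<Rightarrow> real) \<Rightarrow> ennreal) \<Rightarrow> bool" where
  "dirichlet_form M E \<longleftrightarrow>
     \<comment> \<open>E is a functional on L2 (classes): invariant under a.e. equality\<close>
     (\<forall>u\<in>L2 M. \<forall>v\<in>L2 M. (AE x in M. u x = v x) \<longrightarrow> E u = E v) \<and>
     \<comment> \<open>convex\<close>
     (\<forall>u\<in>L2 M. \<forall>v\<in>L2 M. \<forall>t::real. 0 \<le> t \<and> t \<le> 1 \<longrightarrow>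
        E (\<lambda>x. t * u x + (1 - t) * v x) \<le> ennreal t * E u + ennreal (1 - t) * E v) \<and>
     \<comment> \<open>lower semicontinuous w.r.t. the L2 norm\<close>
     (\<forall>u\<in>L2 M. \<forall>w::nat \<Rightarrow> 'a \<Rightarrow> real. (\<forall>n. w n \<in> L2 M) \<and>
        ((\<lambda>n. L2norm M (\<lambda>x. w n x - u x)) \<longlonglongrightarrow> 0) \<longrightarrow> E u \<le> liminf (\<lambda>n. E (w n))) \<and>
     \<comment> \<open>densely defined\<close>
     (\<forall>u\<in>L2 M. \<forall>\<epsilon>>0. \<exists>v\<in>L2 M. E v < \<infinity> \<and> L2norm M (\<lambda>x. u x - v x) < \<epsilon>) \<and>
     \<comment> \<open>condition (1)\<close>
     (\<forall>u\<in>L2 M. \<forall>v\<in>L2 M. E (\<lambda>x. min (u x) (v x)) + E (\<lambda>x. max (u x) (v x)) \<le> E u + E v) \<and>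
     \<comment> \<open>condition (2)\<close>
     (\<forall>u\<in>L2 M. \<forall>v\<in>L2 M. \<forall>\<alpha>::real. \<alpha> > 0 \<longrightarrow>
        (let w = (\<lambda>x. (1/2) * (pos_part (u x - v x + \<alpha>) - neg_part (u x - v x - \<alpha>)))
         in E (\<lambda>x. v x + w x) + E (\<lambda>x. u x - w x) \<le> E u + E v))"

definition even_form :: "'a measure \<Rightarrow> (('a \<Rightarrow> real) \<Rightarrow> ennreal) \<Rightarrow> bool" where
  "even_form M E \<longleftrightarrow> E (\<lambda>x. 0) = 0 \<and> (\<forall>u\<in>L2 M. E (\<lambda>x. - u x) = E u)"

definition E1 :: "'a measure \<Rightarrow> (('a \<Rightarrow> real) \<Rightarrow> ennreal) \<Rightarrow> ('a \<Rightarrow> real) \<Rightarrow> ennreal" where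
  "E1 M E u = ennreal (integral\<^sup>L M (\<lambda>x. (u x)\<^sup>2)) + E u"

definition dirichlet_space :: "'a measure \<Rightarrow> (('a \<Rightarrow> real) \<Rightarrow> ennreal) \<Rightarrow> ('a \<Rightarrow> real) set" where
  "dirichlet_space M E = {u \<in> L2 M. \<exists>c::real>0. E1 M E (\<lambda>x. c * u x) < \<infinity>}"

definition Dnorm :: "'a measure \<Rightarrow> (('a \<Rightarrow> real) \<Rightarrow> ennreal) \<Rightarrow> ('a \<Rightarrow> real) \<Rightarrow> ennreal" where
  "Dnorm M E u = (if u \<in> dirichlet_space M E
     then (INF c\<in>{c::real. c > 0 \<and> E1 M E (\<lambda>x. u x / c) \<le> 1}. ennreal c) else \<infinity>)"

definition cap_test :: "'a::topological_space measure \<Rightarrow> 'a set \<Rightarrow> ('a \<Rightarrow> real) set" where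
  "cap_test M A = {u \<in> L2 M. \<exists>U. open U \<and> A \<subseteq> U \<and> (AE x in M. x \<in> U \<longrightarrow> u x \<ge> 1)}"

definition Cap :: "'a::topological_space measure \<Rightarrow> (('a \<Rightarrow> real) \<Rightarrow> ennreal) \<Rightarrow> 'a set \<Rightarrow> ennreal" where
  "Cap M E A = (INF u\<in>cap_test M A. Dnorm M E u)"

definition quasi_continuous :: "'a::topological_space measure \<Rightarrow> (('a \<Rightarrow> real) \<Rightarrow> ennreal) \<Rightarrow> ('a \<Rightarrow> real) \<Rightarrow> bool" where
  "quasi_continuous M E f \<longleftrightarrow>
     (\<forall>\<epsilon>::real>0. \<exists>V. open V \<and> Cap M E V \<le> ennreal \<epsilon> \<and> continuous_on (- V) f)"

definition qc_element :: "'a::topological_space measure \<Rightarrow> (('a \<Rightarrow> real) \<Rightarrow> ennreal) \<Rightarrow> ('a \<Rightarrow> real) \<Rightarrow> bool" where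
  "qc_element M E f \<longleftrightarrow> (\<exists>g. quasi_continuous M E g \<and> (AE x in M. f x = g x))"

end

theory Submission
  imports Defs
begin

text \<open>For (i) \<Rightarrow> (ii), a test function u for A is at least 1 on A, so
  m(A)^(1/q) \<le> \<parallel>u\<parallel>_q \<le> C \<parallel>u\<parallel>_\<DD>.
  For (ii) \<Rightarrow> (i), let f be quasi-continuous with \<parallel>f\<parallel>_\<DD> < c. Outside an open set V of small
  capacity the set {|f| > t} is relatively open, so |f|/t plus a test function for V is a test
  function for {|f| > t}; since \<E> decreases under u \<mapsto> |u| (by the lattice property and evenness),
  this gives Cap {|f| > t} \<le> c/t. The capacity bound for an exponent q' \<in> (q, p) therefore makes
  f of weak type q': m {|f| > t} \<le> (C c/t)^q'. Splitting the range of |f| dyadically above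
  height c and using \<parallel>f\<parallel>_2 \<le> c below it yields \<integral>|f|^q \<le> K c^q, the geometric series
  \<Sum> 2^(k(q - q')) converging because q < q'.\<close>

lemma ennpow_mono: "x \<le> y \<Longrightarrow> 0 \<le> r \<Longrightarrow> ennpow x r \<le> ennpow y r"
  unfolding ennpow_def
  by (cases "y = \<infinity>"; cases "x = \<infinity>")
    (auto simp: top_unique top.not_eq_extremum intro!: ennreal_leI powr_mono2 enn2real_mono)

lemma ennpow_ennreal: "0 \<le> y \<Longrightarrow> ennpow (ennreal y) r = ennreal (y powr r)"
  by (simp add: ennpow_def)

lemma le_ennreal_powr_if_ennpow_le:
  assumes "ennpow x r \<le> ennreal y" and r: "0 < r" and y: "0 \<le> y"
  shows "x \<le> ennreal (y powr (1 / r))"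
proof -
  have "x \<noteq> \<infinity>" using assms(1) by (auto simp: ennpow_def top_unique)
  then obtain m where m: "x = ennreal m" "0 \<le> m" by (cases x) auto
  then have "m powr r \<le> y" using assms(1) y by (simp add: ennpow_def)
  then have "(m powr r) powr (1 / r) \<le> y powr (1 / r)" using r by (intro powr_mono2) auto
  then show ?thesis using m r by (simp add: powr_powr ennreal_leI)
qed

lemma le_ennreal_mult_INF:
  fixes f :: "'b \<Rightarrow> ennreal"
  assumes C: "0 < C" and le: "\<And>c. c \<in> S \<Longrightarrow> x \<le> ennreal C * f c"
  shows "x \<le> ennreal C * (INF c\<in>S. f c)"
proof -
  have inv: "ennreal C * ennreal (1 / C) = 1" using C by (simp flip: ennreal_mult)
  have "x * ennreal (1 / C) \<le> (INF c\<in>S. f c)"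
  proof (rule INF_greatest)
    fix c assume "c \<in> S"
    then have "x * ennreal (1 / C) \<le> ennreal C * f c * ennreal (1 / C)"
      using le by (intro mult_right_mono) auto
    then show "x * ennreal (1 / C) \<le> f c" by (metis inv mult.assoc mult.commute mult_1_right)
  qed
  then have "ennreal C * (x * ennreal (1 / C)) \<le> ennreal C * (INF c\<in>S. f c)"
    by (rule mult_left_mono) simp
  then show ?thesis by (metis inv mult.assoc mult.commute mult_1_right)
qed

section \<open>Weak type implies strong type\<close>

lemma dyadic_bracket:
  fixes c y :: real
  assumes c: "0 < c" and y: "c < y"
  obtains k :: nat where "2 ^ k * c < y" "y \<le> 2 ^ Suc k * c"
proof -
  obtain n :: nat where "y / c < 2 ^ n" using real_arch_pow[of 2 "y / c"] by auto
  then have ex: "\<exists>n::nat. y \<le> 2 ^ n * c" using c by (auto simp: field_simps intro!: exI[of _ n])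
  define n where "n = (LEAST n::nat. y \<le> 2 ^ n * c)"
  have n: "y \<le> 2 ^ n * c" unfolding n_def by (rule LeastI_ex[OF ex])
  have "n \<noteq> 0" using n y by (rule_tac ccontr) simp
  then obtain k where k: "n = Suc k" by (cases n) auto
  then have "\<not> y \<le> 2 ^ k * c"
    using not_less_Least[of k "\<lambda>n. y \<le> 2 ^ n * c"] unfolding n_def by simp
  then show thesis using that n k by (simp add: not_le)
qed

lemma abs_powr_le_dyadic_sum:
  fixes y c q :: real
  assumes c: "0 < c" and q: "2 \<le> q"
  shows "ennreal (\<bar>y\<bar> powr q) \<le> ennreal (c powr (q - 2) * y\<^sup>2)
     + (\<Sum>k. ennreal ((2 ^ Suc k * c) powr q) * indicator {2 ^ k * c <..} \<bar>y\<bar>)"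
proof (cases "\<bar>y\<bar> \<le> c")
  case True
  have "\<bar>y\<bar> powr q = \<bar>y\<bar> powr (q - 2) * \<bar>y\<bar> powr 2"
    by (subst powr_add[symmetric]) simp
  also have "\<dots> = \<bar>y\<bar> powr (q - 2) * y\<^sup>2"
    by (cases "y = 0") (simp_all add: powr_numeral)
  also have "\<dots> \<le> c powr (q - 2) * y\<^sup>2"
    using True q by (intro mult_right_mono powr_mono2) auto
  finally show ?thesis by (intro add_increasing2) (auto intro: ennreal_leI)
next
  case False
  then obtain k where k: "2 ^ k * c < \<bar>y\<bar>" "\<bar>y\<bar> \<le> 2 ^ Suc k * c"
    using dyadic_bracket[OF c] by (metis not_le)
  define a where "a k = ennreal ((2 ^ Suc k * c) powr q) * indicator {2 ^ k * c <..} \<bar>y\<bar>" for k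
  have "ennreal (\<bar>y\<bar> powr q) \<le> a k"
    using k q by (auto simp: a_def intro!: ennreal_leI powr_mono2)
  also have "\<dots> \<le> (\<Sum>k. a k)"
    using sum_le_suminf[of a "{k}"] by auto
  finally show ?thesis unfolding a_def by (intro add_increasing) auto
qed

lemma nn_integral_abs_powr_le_dyadic:
  fixes f :: "'a \<Rightarrow> real" and c q :: real
  assumes f: "f \<in> borel_measurable M" and c: "0 < c" and q: "2 \<le> q"
  shows "(\<integral>\<^sup>+x. ennreal (\<bar>f x\<bar> powr q) \<partial>M)
     \<le> (\<integral>\<^sup>+x. ennreal (c powr (q - 2) * (f x)\<^sup>2) \<partial>M)
       + (\<Sum>k. ennreal ((2 ^ Suc k * c) powr q) * emeasure M {x\<in>space M. 2 ^ k * c < \<bar>f x\<bar>})"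
proof -
  define S where "S k = {x\<in>space M. 2 ^ k * c < \<bar>f x\<bar>}" for k :: nat
  have S: "S k \<in> sets M" for k unfolding S_def using f by measurable
  have "(\<integral>\<^sup>+x. ennreal (\<bar>f x\<bar> powr q) \<partial>M) \<le> (\<integral>\<^sup>+x. ennreal (c powr (q - 2) * (f x)\<^sup>2)
      + (\<Sum>k. ennreal ((2 ^ Suc k * c) powr q) * indicator (S k) x) \<partial>M)"
  proof (rule nn_integral_mono)
    fix x assume "x \<in> space M"
    then show "ennreal (\<bar>f x\<bar> powr q) \<le> ennreal (c powr (q - 2) * (f x)\<^sup>2)
      + (\<Sum>k. ennreal ((2 ^ Suc k * c) powr q) * indicator (S k) x)"
      using abs_powr_le_dyadic_sum[OF c q, of "f x"] by (simp add: S_def indicator_def)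
  qed
  also have "\<dots> = (\<integral>\<^sup>+x. ennreal (c powr (q - 2) * (f x)\<^sup>2) \<partial>M)
      + (\<Sum>k. \<integral>\<^sup>+x. ennreal ((2 ^ Suc k * c) powr q) * indicator (S k) x \<partial>M)"
    using f S by (simp add: nn_integral_add nn_integral_suminf)
  finally show ?thesis using S by (simp add: nn_integral_cmult_indicator S_def)
qed

lemma dyadic_term_eq:
  fixes c K q q' :: real
  assumes c: "0 < c" and K: "0 \<le> K"
  shows "(2 ^ Suc k * c) powr q * (K * c / (2 ^ k * c)) powr q'
       = c powr q * 2 powr q * K powr q' * (2 powr (q - q')) ^ k"
proof -
  have pow: "((2::real) ^ k) powr a = (2 powr a) ^ k" for a
    by (simp add: powr_realpow[symmetric] powr_powr powr_power mult.commute)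
  have "K * c / (2 ^ k * c) = K / 2 ^ k" using c by simp
  then show ?thesis
    using c K by (simp add: powr_mult powr_divide pow powr_diff power_divide field_simps)
qed

lemma suminf_ennreal_geometric:
  fixes D \<rho> :: real
  assumes D: "0 \<le> D" and \<rho>: "0 \<le> \<rho>" "\<rho> < 1"
  shows "(\<Sum>k. ennreal (D * \<rho> ^ k)) = ennreal (D / (1 - \<rho>))"
proof -
  have summable: "summable (\<lambda>k. \<rho> ^ k)" using \<rho> by (intro summable_geometric) simp
  then have "(\<Sum>k. ennreal (D * \<rho> ^ k)) = ennreal (\<Sum>k. D * \<rho> ^ k)"
    using D \<rho> by (intro suminf_ennreal2 summable_mult) auto
  also have "(\<Sum>k. D * \<rho> ^ k) = D / (1 - \<rho>)"
    using suminf_mult[OF summable, of D] suminf_geometric[of \<rho>] \<rho> by simp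
  finally show ?thesis .
qed

lemma nn_integral_powr_mult_square_le:
  fixes f :: "'a \<Rightarrow> real" and c q :: real
  assumes f: "f \<in> borel_measurable M" and c: "0 < c"
    and L2: "(\<integral>\<^sup>+x. ennreal ((f x)\<^sup>2) \<partial>M) \<le> ennreal (c\<^sup>2)"
  shows "(\<integral>\<^sup>+x. ennreal (c powr (q - 2) * (f x)\<^sup>2) \<partial>M) \<le> ennreal (c powr q)"
proof -
  have "(\<integral>\<^sup>+x. ennreal (c powr (q - 2) * (f x)\<^sup>2) \<partial>M)
      = ennreal (c powr (q - 2)) * (\<integral>\<^sup>+x. ennreal ((f x)\<^sup>2) \<partial>M)"
    using f by (simp add: ennreal_mult nn_integral_cmult)
  also have "\<dots> \<le> ennreal (c powr (q - 2)) * ennreal (c\<^sup>2)"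
    using L2 by (rule mult_left_mono) simp
  also have "\<dots> = ennreal (c powr q)"
  proof -
    have "c powr q = c powr (q - 2) * c powr 2" by (subst powr_add[symmetric]) simp
    then show ?thesis using c by (simp add: powr_numeral flip: ennreal_mult)
  qed
  finally show ?thesis .
qed

lemma nn_integral_abs_powr_le_if_weak_type:
  fixes f :: "'a \<Rightarrow> real" and c q q' K :: real
  assumes f: "f \<in> borel_measurable M" and c: "0 < c" and q: "2 \<le> q" "q < q'" and K: "0 \<le> K"
    and L2: "(\<integral>\<^sup>+x. ennreal ((f x)\<^sup>2) \<partial>M) \<le> ennreal (c\<^sup>2)"
    and weak: "\<And>t. 0 < t \<Longrightarrow> emeasure M {x\<in>space M. t < \<bar>f x\<bar>} \<le> ennreal ((K * c / t) powr q')"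
  shows "(\<integral>\<^sup>+x. ennreal (\<bar>f x\<bar> powr q) \<partial>M)
    \<le> ennreal ((1 + 2 powr q * K powr q' / (1 - 2 powr (q - q'))) * c powr q)"
proof -
  define \<rho> where "\<rho> = (2::real) powr (q - q')"
  have \<rho>: "0 < \<rho>" "\<rho> < 1" unfolding \<rho>_def using q by (auto intro: powr_less_one)
  define D where "D = c powr q * 2 powr q * K powr q'"
  have D: "0 \<le> D" unfolding D_def by simp
  have high: "ennreal ((2 ^ Suc k * c) powr q) * emeasure M {x\<in>space M. 2 ^ k * c < \<bar>f x\<bar>}
      \<le> ennreal (D * \<rho> ^ k)" for k
  proof -
    have "0 < 2 ^ k * c" using c by simp
    then have "ennreal ((2 ^ Suc k * c) powr q) * emeasure M {x\<in>space M. 2 ^ k * c < \<bar>f x\<bar>}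
        \<le> ennreal ((2 ^ Suc k * c) powr q) * ennreal ((K * c / (2 ^ k * c)) powr q')"
      by (rule mult_left_mono[OF weak]) simp_all
    also have "\<dots> = ennreal (D * \<rho> ^ k)"
      using dyadic_term_eq[OF c K, of k q q'] by (simp add: D_def \<rho>_def flip: ennreal_mult)
    finally show ?thesis .
  qed
  have "(\<Sum>k. ennreal ((2 ^ Suc k * c) powr q) * emeasure M {x\<in>space M. 2 ^ k * c < \<bar>f x\<bar>})
      \<le> (\<Sum>k. ennreal (D * \<rho> ^ k))"
    using high by (intro suminf_le) auto
  then have "(\<integral>\<^sup>+x. ennreal (\<bar>f x\<bar> powr q) \<partial>M) \<le> ennreal (c powr q) + ennreal (D / (1 - \<rho>))"
    using nn_integral_abs_powr_le_dyadic[OF f c q(1)] nn_integral_powr_mult_square_le[OF f c L2]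
    unfolding suminf_ennreal_geometric[OF D less_imp_le[OF \<rho>(1)] \<rho>(2)]
    by (meson add_mono order_trans)
  also have "\<dots> = ennreal (c powr q + D / (1 - \<rho>))" using D \<rho> by simp
  also have "c powr q + D / (1 - \<rho>) = (1 + 2 powr q * K powr q' / (1 - 2 powr (q - q'))) * c powr q"
    using \<rho> by (simp add: D_def \<rho>_def[symmetric] field_simps)
  finally show ?thesis .
qed

section \<open>The Minkowski norm of the Dirichlet space\<close>

lemma L2_add:
  assumes a: "a \<in> L2 M" and b: "b \<in> L2 M"
  shows "(\<lambda>x. a x + b x) \<in> L2 M"
proof -
  have am: "a \<in> borel_measurable M" "integrable M (\<lambda>x. (a x)\<^sup>2)"
    and bm: "b \<in> borel_measurable M" "integrable M (\<lambda>x. (b x)\<^sup>2)"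
    using a b by (simp_all add: L2_def)
  then have bound: "integrable M (\<lambda>x. 2 * (a x)\<^sup>2 + 2 * (b x)\<^sup>2)"
    and meas: "(\<lambda>x. (a x + b x)\<^sup>2) \<in> borel_measurable M"
    by simp_all
  have "(a x + b x)\<^sup>2 \<le> 2 * (a x)\<^sup>2 + 2 * (b x)\<^sup>2" for x
    using sum_squares_ge_zero[of "a x - b x" 0] by (simp add: power2_eq_square algebra_simps)
  then have "AE x in M. norm ((a x + b x)\<^sup>2) \<le> norm (2 * (a x)\<^sup>2 + 2 * (b x)\<^sup>2)"
    by (intro AE_I2) simp
  from Bochner_Integration.integrable_bound[OF bound meas this]
  show ?thesis using am bm by (simp add: L2_def)
qed

lemma L2_cmult: "a \<in> L2 M \<Longrightarrow> (\<lambda>x. k * a x) \<in> L2 M"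
  unfolding L2_def by (auto simp: power_mult_distrib)

lemma L2_divide: "a \<in> L2 M \<Longrightarrow> (\<lambda>x. a x / k) \<in> L2 M"
  using L2_cmult[of a M "1 / k"] by simp

lemma L2_abs: "a \<in> L2 M \<Longrightarrow> (\<lambda>x. \<bar>a x\<bar>) \<in> L2 M"
  unfolding L2_def by auto

lemma L2_uminus: "a \<in> L2 M \<Longrightarrow> (\<lambda>x. - a x) \<in> L2 M"
  unfolding L2_def by auto

lemma integral_square_convex_le:
  fixes a b :: "'a \<Rightarrow> real"
  assumes a: "a \<in> L2 M" and b: "b \<in> L2 M" and t: "0 \<le> t" "t \<le> 1"
  shows "integral\<^sup>L M (\<lambda>x. (t * a x + (1 - t) * b x)\<^sup>2)
    \<le> t * integral\<^sup>L M (\<lambda>x. (a x)\<^sup>2) + (1 - t) * integral\<^sup>L M (\<lambda>x. (b x)\<^sup>2)"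
proof -
  have pointwise: "(t * a x + (1 - t) * b x)\<^sup>2 \<le> t * (a x)\<^sup>2 + (1 - t) * (b x)\<^sup>2" for x
  proof -
    have "t * (a x)\<^sup>2 + (1 - t) * (b x)\<^sup>2 - (t * a x + (1 - t) * b x)\<^sup>2 = t * (1 - t) * (a x - b x)\<^sup>2"
      by (simp add: power2_eq_square algebra_simps)
    moreover have "0 \<le> t * (1 - t) * (a x - b x)\<^sup>2" using t by simp
    ultimately show ?thesis by linarith
  qed
  have ia: "integrable M (\<lambda>x. (a x)\<^sup>2)" and ib: "integrable M (\<lambda>x. (b x)\<^sup>2)"
    using a b by (simp_all add: L2_def)
  have "integrable M (\<lambda>x. (t * a x + (1 - t) * b x)\<^sup>2)"
    using L2_add[OF L2_cmult[OF a] L2_cmult[OF b]] by (simp add: L2_def)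
  then have "integral\<^sup>L M (\<lambda>x. (t * a x + (1 - t) * b x)\<^sup>2)
      \<le> integral\<^sup>L M (\<lambda>x. t * (a x)\<^sup>2 + (1 - t) * (b x)\<^sup>2)"
    using ia ib pointwise by (intro integral_mono) auto
  also have "\<dots> = t * integral\<^sup>L M (\<lambda>x. (a x)\<^sup>2) + (1 - t) * integral\<^sup>L M (\<lambda>x. (b x)\<^sup>2)"
    using ia ib by simp
  finally show ?thesis .
qed

lemma E1_convex:
  assumes dir: "dirichlet_form M E" and a: "a \<in> L2 M" and b: "b \<in> L2 M"
    and t: "0 \<le> t" "t \<le> 1"
  shows "E1 M E (\<lambda>x. t * a x + (1 - t) * b x) \<le> ennreal t * E1 M E a + ennreal (1 - t) * E1 M E b"
proof -
  have "E (\<lambda>x. t * a x + (1 - t) * b x) \<le> ennreal t * E a + ennreal (1 - t) * E b"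
    using dir a b t unfolding dirichlet_form_def by blast
  moreover have "ennreal (integral\<^sup>L M (\<lambda>x. (t * a x + (1 - t) * b x)\<^sup>2))
      \<le> ennreal t * ennreal (integral\<^sup>L M (\<lambda>x. (a x)\<^sup>2))
        + ennreal (1 - t) * ennreal (integral\<^sup>L M (\<lambda>x. (b x)\<^sup>2))"
    using integral_square_convex_le[OF a b t] t
    by (simp add: ennreal_leI flip: ennreal_mult ennreal_plus)
  ultimately have "E1 M E (\<lambda>x. t * a x + (1 - t) * b x)
      \<le> (ennreal t * ennreal (integral\<^sup>L M (\<lambda>x. (a x)\<^sup>2))
          + ennreal (1 - t) * ennreal (integral\<^sup>L M (\<lambda>x. (b x)\<^sup>2)))
        + (ennreal t * E a + ennreal (1 - t) * E b)"
    unfolding E1_def by (intro add_mono)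
  also have "\<dots> = ennreal t * E1 M E a + ennreal (1 - t) * E1 M E b"
    unfolding E1_def by (simp add: distrib_left ac_simps)
  finally show ?thesis .
qed

lemma E1_divide_add_le_1:
  assumes dir: "dirichlet_form M E" and a: "a \<in> L2 M" and b: "b \<in> L2 M"
    and c: "0 < c" and r: "0 < r"
    and Ea: "E1 M E (\<lambda>x. a x / c) \<le> 1" and Eb: "E1 M E (\<lambda>x. b x / r) \<le> 1"
  shows "E1 M E (\<lambda>x. (a x + b x) / (c + r)) \<le> 1"
proof -
  define t where "t = c / (c + r)"
  have t: "0 \<le> t" "t \<le> 1" and t': "1 - t = r / (c + r)"
    using c r by (auto simp: t_def field_simps)
  have "(\<lambda>x. (a x + b x) / (c + r)) = (\<lambda>x. t * (a x / c) + (1 - t) * (b x / r))"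
    unfolding t' unfolding t_def using c r by (auto simp: fun_eq_iff add_divide_distrib)
  then have "E1 M E (\<lambda>x. (a x + b x) / (c + r))
      \<le> ennreal t * E1 M E (\<lambda>x. a x / c) + ennreal (1 - t) * E1 M E (\<lambda>x. b x / r)"
    using E1_convex[OF dir L2_divide[OF a] L2_divide[OF b] t] by simp
  also have "\<dots> \<le> ennreal t * 1 + ennreal (1 - t) * 1"
    by (intro add_mono mult_left_mono Ea Eb) auto
  also have "\<dots> = 1" using t by (simp flip: ennreal_plus)
  finally show ?thesis .
qed

lemma E_abs_le:
  assumes dir: "dirichlet_form M E" and even: "even_form M E" and u: "u \<in> L2 M"
  shows "E (\<lambda>x. \<bar>u x\<bar>) \<le> E u"
proof -
  have "\<forall>u\<in>L2 M. \<forall>v\<in>L2 M. E (\<lambda>x. min (u x) (v x)) + E (\<lambda>x. max (u x) (v x)) \<le> E u + E v"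
    using dir unfolding dirichlet_form_def by blast
  from this[rule_format, OF u L2_uminus[OF u]]
  have "E (\<lambda>x. min (u x) (- u x)) + E (\<lambda>x. max (u x) (- u x)) \<le> E u + E (\<lambda>x. - u x)" .
  moreover have "(\<lambda>x. min (u x) (- u x)) = (\<lambda>x. - \<bar>u x\<bar>)" "(\<lambda>x. max (u x) (- u x)) = (\<lambda>x. \<bar>u x\<bar>)"
    by (auto simp: fun_eq_iff)
  moreover have "E (\<lambda>x. - \<bar>u x\<bar>) = E (\<lambda>x. \<bar>u x\<bar>)" "E (\<lambda>x. - u x) = E u"
    using even u L2_abs[OF u] unfolding even_form_def by auto
  ultimately have "2 * E (\<lambda>x. \<bar>u x\<bar>) \<le> 2 * E u" by (simp add: mult_2)
  then show ?thesis by (simp add: ennreal_mult_le_mult_iff)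
qed

lemma E1_abs_divide_le:
  assumes dir: "dirichlet_form M E" and even: "even_form M E" and u: "u \<in> L2 M" and c: "0 < c"
  shows "E1 M E (\<lambda>x. \<bar>u x\<bar> / c) \<le> E1 M E (\<lambda>x. u x / c)"
proof -
  have eq: "(\<lambda>x. \<bar>u x\<bar> / c) = (\<lambda>x. \<bar>u x / c\<bar>)" using c by auto
  have "E (\<lambda>x. \<bar>u x / c\<bar>) \<le> E (\<lambda>x. u x / c)" using E_abs_le[OF dir even L2_divide[OF u]] .
  then show ?thesis unfolding E1_def eq power2_abs by (rule add_left_mono)
qed

lemma Dnorm_le_if_E1_le:
  assumes a: "a \<in> L2 M" and c: "0 < c" and Ea: "E1 M E (\<lambda>x. a x / c) \<le> 1"
  shows "Dnorm M E a \<le> ennreal c"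
proof -
  have "E1 M E (\<lambda>x. (1 / c) * a x) < \<infinity>"
    using Ea by (simp add: le_less_trans[OF _ ennreal_less_top[of 1]])
  then have "a \<in> dirichlet_space M E" using a c unfolding dirichlet_space_def by (auto intro!: exI[of _ "1 / c"])
  then show ?thesis unfolding Dnorm_def using c Ea by (auto intro!: INF_lower2[of c])
qed

lemma Dnorm_lessE:
  assumes "Dnorm M E u < ennreal e"
  obtains r where "0 < r" "r < e" "E1 M E (\<lambda>x. u x / r) \<le> 1"
proof -
  have "u \<in> dirichlet_space M E" using assms by (auto simp: Dnorm_def split: if_splits)
  then obtain r where "0 < r" "E1 M E (\<lambda>x. u x / r) \<le> 1" "ennreal r < ennreal e"
    using assms unfolding Dnorm_def by (auto simp: INF_less_iff)
  then show ?thesis using that by (auto simp: ennreal_less_iff)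
qed

lemma nn_integral_square_le_if_E1_le:
  assumes f: "f \<in> L2 M" and c: "0 < c" and Ef: "E1 M E (\<lambda>x. f x / c) \<le> 1"
  shows "(\<integral>\<^sup>+x. ennreal ((f x)\<^sup>2) \<partial>M) \<le> ennreal (c\<^sup>2)"
proof -
  have "ennreal (integral\<^sup>L M (\<lambda>x. (f x / c)\<^sup>2)) \<le> E1 M E (\<lambda>x. f x / c)"
    unfolding E1_def by simp
  also note Ef
  finally have "integral\<^sup>L M (\<lambda>x. (f x)\<^sup>2) / c\<^sup>2 \<le> 1"
    by (simp add: ennreal_le_1 power_divide)
  then have "integral\<^sup>L M (\<lambda>x. (f x)\<^sup>2) \<le> c\<^sup>2" using c by (simp add: divide_le_eq)
  moreover have "integrable M (\<lambda>x. (f x)\<^sup>2)" using f by (simp add: L2_def)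
  ultimately show ?thesis by (simp add: nn_integral_eq_integral ennreal_leI)
qed

lemma Dnorm_add_le_if_E1_le:
  assumes dir: "dirichlet_form M E" and a: "a \<in> L2 M" and b: "b \<in> L2 M"
    and c: "0 < c" and r: "0 < r"
    and Ea: "E1 M E (\<lambda>x. a x / c) \<le> 1" and Eb: "E1 M E (\<lambda>x. b x / r) \<le> 1"
  shows "Dnorm M E (\<lambda>x. a x + b x) \<le> ennreal (c + r)"
  using c r by (intro Dnorm_le_if_E1_le L2_add[OF a b] E1_divide_add_le_1[OF dir a b c r Ea Eb]) simp

section \<open>Capacity versus the L^q embedding\<close>

lemma ennpow_emeasure_le_Cap_if_Lq_embedding:
  assumes q: "0 < q" and C: "0 < C"
    and embedding: "\<forall>f\<in>dirichlet_space M E. Lqnorm M q f \<le> ennreal C * Dnorm M E f"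
    and A: "A \<in> sets M"
  shows "ennpow (emeasure M A) (1 / q) \<le> ennreal C * Cap M E A"
  unfolding Cap_def
proof (rule le_ennreal_mult_INF[OF C])
  fix u assume u: "u \<in> cap_test M A"
  show "ennpow (emeasure M A) (1 / q) \<le> ennreal C * Dnorm M E u"
  proof (cases "u \<in> dirichlet_space M E")
    case False
    then show ?thesis using C by (simp add: Dnorm_def)
  next
    case True
    from u obtain U where "A \<subseteq> U" "AE x in M. x \<in> U \<longrightarrow> 1 \<le> u x"
      by (auto simp: cap_test_def)
    then have "AE x in M. indicator A x \<le> ennreal (\<bar>u x\<bar> powr q)"
      using q by (auto elim!: eventually_mono simp: indicator_def intro!: ge_one_powr_ge_zero)
    then have "emeasure M A \<le> (\<integral>\<^sup>+x. ennreal (\<bar>u x\<bar> powr q) \<partial>M)"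
      using A by (simp add: nn_integral_mono_AE flip: nn_integral_indicator)
    then have "ennpow (emeasure M A) (1 / q) \<le> Lqnorm M q u"
      unfolding Lqnorm_def using q by (intro ennpow_mono) auto
    also have "\<dots> \<le> ennreal C * Dnorm M E u" using embedding True by blast
    finally show ?thesis .
  qed
qed

lemma superlevel_cap_test:
  assumes f: "f \<in> L2 M" and fg: "AE x in M. f x = g x" and t: "0 < t"
    and V: "open V" "continuous_on (- V) g" and u: "u \<in> cap_test M V"
    and B: "B \<subseteq> {x. t < \<bar>g x\<bar>}"
  shows "(\<lambda>x. \<bar>f x\<bar> / t + \<bar>u x\<bar>) \<in> cap_test M B"
proof -
  obtain U where U: "open U" "V \<subseteq> U" "AE x in M. x \<in> U \<longrightarrow> 1 \<le> u x" and uL: "u \<in> L2 M"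
    using u by (auto simp: cap_test_def)
  have "open {y::real. t < \<bar>y\<bar>}" by (intro open_Collect_less continuous_intros)
  then obtain W where W: "open W" "W \<inter> - V = g -` {y. t < \<bar>y\<bar>} \<inter> - V"
    using V(2) unfolding continuous_on_open_invariant by blast
  have "B \<subseteq> W \<union> U" using B W(2) U(2) by blast
  moreover have "AE x in M. x \<in> W \<union> U \<longrightarrow> 1 \<le> \<bar>f x\<bar> / t + \<bar>u x\<bar>"
    using U(3) fg
  proof eventually_elim
    case (elim x)
    show ?case
    proof
      assume x: "x \<in> W \<union> U"
      show "1 \<le> \<bar>f x\<bar> / t + \<bar>u x\<bar>"
      proof (cases "x \<in> U")
        case True
        then have "1 \<le> \<bar>u x\<bar>" using elim by auto
        moreover have "0 \<le> \<bar>f x\<bar> / t" using t by simp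
        ultimately show ?thesis by linarith
      next
        case False
        then have "t < \<bar>f x\<bar>" using x U(2) W(2) elim by auto
        then have "1 < \<bar>f x\<bar> / t" using t by simp
        then show ?thesis using abs_ge_zero[of "u x"] by linarith
      qed
    qed
  qed
  moreover have "(\<lambda>x. \<bar>f x\<bar> / t + \<bar>u x\<bar>) \<in> L2 M"
    using L2_add[OF L2_divide[OF L2_abs[OF f]] L2_abs[OF uL]] .
  ultimately show ?thesis using W(1) U(1) unfolding cap_test_def by blast
qed

lemma Cap_superlevel_le:
  assumes dir: "dirichlet_form M E" and even: "even_form M E"
    and f: "f \<in> L2 M" and c: "0 < c" and Ef: "E1 M E (\<lambda>x. f x / c) \<le> 1"
    and g: "quasi_continuous M E g" and fg: "AE x in M. f x = g x"
    and t: "0 < t" and B: "B \<subseteq> {x. t < \<bar>g x\<bar>}"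
  shows "Cap M E B \<le> ennreal (c / t)"
proof (rule ennreal_le_epsilon)
  fix e :: real assume e: "0 < e"
  obtain V where V: "open V" "Cap M E V \<le> ennreal (e / 2)" "continuous_on (- V) g"
    using g e unfolding quasi_continuous_def by (meson half_gt_zero)
  have "ennreal (e / 2) < ennreal e" using e by (simp add: ennreal_lessI)
  then have "Cap M E V < ennreal e" using V(2) by (rule le_less_trans[rotated])
  then obtain u where u: "u \<in> cap_test M V" "Dnorm M E u < ennreal e"
    unfolding Cap_def by (auto simp: INF_less_iff)
  obtain r where r: "0 < r" "r < e" "E1 M E (\<lambda>x. u x / r) \<le> 1"
    using Dnorm_lessE[OF u(2)] by blast
  have uL: "u \<in> L2 M" using u(1) by (simp add: cap_test_def)
  have "(\<lambda>x. \<bar>f x\<bar> / t / (c / t)) = (\<lambda>x. \<bar>f x\<bar> / c)" using t by auto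
  then have "E1 M E (\<lambda>x. \<bar>f x\<bar> / t / (c / t)) \<le> 1"
    using E1_abs_divide_le[OF dir even f c] Ef by simp
  moreover have "E1 M E (\<lambda>x. \<bar>u x\<bar> / r) \<le> 1"
    using E1_abs_divide_le[OF dir even uL r(1)] r(3) by simp
  ultimately have "Dnorm M E (\<lambda>x. \<bar>f x\<bar> / t + \<bar>u x\<bar>) \<le> ennreal (c / t + r)"
    using c t r by (intro Dnorm_add_le_if_E1_le[OF dir L2_divide[OF L2_abs[OF f]] L2_abs[OF uL]]) auto
  moreover have "Cap M E B \<le> Dnorm M E (\<lambda>x. \<bar>f x\<bar> / t + \<bar>u x\<bar>)"
    unfolding Cap_def by (rule INF_lower) (rule superlevel_cap_test[OF f fg t V(1,3) u(1) B])
  moreover have "ennreal (c / t + r) \<le> ennreal (c / t) + ennreal e"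
    using c t r by (simp flip: ennreal_plus)
  ultimately show "Cap M E B \<le> ennreal (c / t) + ennreal e" by order
qed

lemma emeasure_superlevel_le:
  assumes dir: "dirichlet_form M E" and even: "even_form M E"
    and f: "f \<in> L2 M" and c: "0 < c" and Ef: "E1 M E (\<lambda>x. f x / c) \<le> 1"
    and g: "quasi_continuous M E g" and fg: "AE x in M. f x = g x"
    and t: "0 < t" and C: "0 < C" and q: "0 < q"
    and Cap_bound: "\<forall>A\<in>sets M. ennpow (emeasure M A) (1 / q) \<le> ennreal C * Cap M E A"
  shows "emeasure M {x\<in>space M. t < \<bar>f x\<bar>} \<le> ennreal ((C * c / t) powr q)"
proof -
  from fg obtain N where N: "{x\<in>space M. f x \<noteq> g x} \<subseteq> N" "N \<in> null_sets M"
    by (rule AE_E) (auto intro: null_setsI)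
  define A where "A = {x\<in>space M. t < \<bar>f x\<bar>} - N"
  have "f \<in> borel_measurable M" using f by (simp add: L2_def)
  then have "{x\<in>space M. t < \<bar>f x\<bar>} \<in> sets M" by measurable
  then have A: "A \<in> sets M" and "emeasure M A = emeasure M {x\<in>space M. t < \<bar>f x\<bar>}"
    using N(2) by (auto simp: A_def emeasure_Diff_null_set)
  have "A \<subseteq> {x. t < \<bar>g x\<bar>}" using N(1) by (auto simp: A_def)
  then have "Cap M E A \<le> ennreal (c / t)" by (rule Cap_superlevel_le[OF dir even f c Ef g fg t])
  then have "ennreal C * Cap M E A \<le> ennreal C * ennreal (c / t)"
    by (rule mult_left_mono) simp
  also have "\<dots> = ennreal (C * c / t)" using C c t by (simp flip: ennreal_mult)
  finally have "ennreal C * Cap M E A \<le> ennreal (C * c / t)" .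
  then have "ennpow (emeasure M A) (1 / q) \<le> ennreal (C * c / t)"
    using Cap_bound A by (meson order_trans)
  from le_ennreal_powr_if_ennpow_le[OF this]
  show ?thesis using \<open>emeasure M A = _\<close> C c t q by simp
qed

lemma Lqnorm_le_mult_Dnorm:
  assumes f: "f \<in> dirichlet_space M E" and K: "0 < K" and q: "0 < q"
    and bound: "\<And>c. 0 < c \<Longrightarrow> E1 M E (\<lambda>x. f x / c) \<le> 1
      \<Longrightarrow> (\<integral>\<^sup>+x. ennreal (\<bar>f x\<bar> powr q) \<partial>M) \<le> ennreal (K * c powr q)"
  shows "Lqnorm M q f \<le> ennreal (K powr (1 / q)) * Dnorm M E f"
proof -
  have "Lqnorm M q f
      \<le> ennreal (K powr (1 / q)) * (INF c\<in>{c. 0 < c \<and> E1 M E (\<lambda>x. f x / c) \<le> 1}. ennreal c)"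
  proof (rule le_ennreal_mult_INF)
    show "0 < K powr (1 / q)" using K by simp
    fix c assume "c \<in> {c. 0 < c \<and> E1 M E (\<lambda>x. f x / c) \<le> 1}"
    then have c: "0 < c" and Ef: "E1 M E (\<lambda>x. f x / c) \<le> 1" by auto
    have "Lqnorm M q f \<le> ennpow (ennreal (K * c powr q)) (1 / q)"
      unfolding Lqnorm_def using bound[OF c Ef] q by (intro ennpow_mono) auto
    also have "\<dots> = ennreal ((K * c powr q) powr (1 / q))"
      by (rule ennpow_ennreal) (use K c in simp)
    also have "(K * c powr q) powr (1 / q) = K powr (1 / q) * c"
      using K c q by (simp add: powr_mult powr_powr)
    also have "ennreal (K powr (1 / q) * c) = ennreal (K powr (1 / q)) * ennreal c"
      using c by (simp add: ennreal_mult)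
    finally show "Lqnorm M q f \<le> ennreal (K powr (1 / q)) * ennreal c" .
  qed
  then show ?thesis using f by (simp add: Dnorm_def)
qed

lemma Lq_embedding_if_Cap_bound:
  assumes dir: "dirichlet_form M E" and even: "even_form M E"
    and qc: "\<forall>f\<in>dirichlet_space M E. qc_element M E f"
    and q: "2 \<le> q" "q < q'" and C: "0 < C"
    and Cap_bound: "\<forall>A\<in>sets M. ennpow (emeasure M A) (1 / q') \<le> ennreal C * Cap M E A"
  shows "\<exists>K>0. \<forall>f\<in>dirichlet_space M E. Lqnorm M q f \<le> ennreal K * Dnorm M E f"
proof -
  define K where "K = 1 + 2 powr q * C powr q' / (1 - 2 powr (q - q'))"
  have "2 powr (q - q') < (1::real)" using q by (intro powr_less_one) auto
  then have "0 \<le> 2 powr q * C powr q' / (1 - 2 powr (q - q'))" by simp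
  then have K: "0 < K" unfolding K_def by linarith
  have "Lqnorm M q f \<le> ennreal (K powr (1 / q)) * Dnorm M E f" if f: "f \<in> dirichlet_space M E" for f
  proof (rule Lqnorm_le_mult_Dnorm[OF f K])
    show "0 < q" using q by simp
    fix c assume c: "0 < c" and Ef: "E1 M E (\<lambda>x. f x / c) \<le> 1"
    have fL: "f \<in> L2 M" using f by (simp add: dirichlet_space_def)
    obtain g where g: "quasi_continuous M E g" "AE x in M. f x = g x"
      using qc f unfolding qc_element_def by blast
    show "(\<integral>\<^sup>+x. ennreal (\<bar>f x\<bar> powr q) \<partial>M) \<le> ennreal (K * c powr q)"
      unfolding K_def
    proof (rule nn_integral_abs_powr_le_if_weak_type[OF _ c q])
      show "f \<in> borel_measurable M" using fL by (simp add: L2_def)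
      show "(\<integral>\<^sup>+x. ennreal ((f x)\<^sup>2) \<partial>M) \<le> ennreal (c\<^sup>2)"
        by (rule nn_integral_square_le_if_E1_le[OF fL c Ef])
      show "emeasure M {x\<in>space M. t < \<bar>f x\<bar>} \<le> ennreal ((C * c / t) powr q')" if "0 < t" for t
        using q C by (intro emeasure_superlevel_le[OF dir even fL c Ef g \<open>0 < t\<close> C _ Cap_bound]) auto
    qed (use C in simp)
  qed
  then show ?thesis using K by (intro exI[of _ "K powr (1 / q)"]) auto
qed

theorem mainTheorem5:
  fixes M :: "'a::t2_space measure" and E :: "('a \<Rightarrow> real) \<Rightarrow> ennreal" and p :: real
  assumes borel: "sets M = sets borel"
    and full_support: "\<forall>U. open U \<and> U \<noteq> {} \<longrightarrow> emeasure M U \<noteq> 0"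
    and dir: "dirichlet_form M E"
    and even: "even_form M E"
    and qc: "\<forall>f\<in>dirichlet_space M E. qc_element M E f"
    and p: "p > 2"
  shows "(\<forall>q\<in>{2..<p}. \<exists>C::real>0. \<forall>f\<in>dirichlet_space M E.
            Lqnorm M q f \<le> ennreal C * Dnorm M E f)
     \<longleftrightarrow> (\<forall>q\<in>{2..<p}. \<exists>C::real>0. \<forall>A\<in>sets M.
            ennreal C * Cap M E A \<ge> ennpow (emeasure M A) (1 / q))"
proof (intro iffI ballI)
  fix q assume q: "q \<in> {2..<p}"
  assume "\<forall>q\<in>{2..<p}. \<exists>C>0. \<forall>f\<in>dirichlet_space M E. Lqnorm M q f \<le> ennreal C * Dnorm M E f"
  then obtain C where "0 < C" "\<forall>f\<in>dirichlet_space M E. Lqnorm M q f \<le> ennreal C * Dnorm M E f"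
    using q by blast
  then show "\<exists>C>0. \<forall>A\<in>sets M. ennpow (emeasure M A) (1 / q) \<le> ennreal C * Cap M E A"
    using q by (intro exI[of _ C]) (auto intro: ennpow_emeasure_le_Cap_if_Lq_embedding)
next
  fix q assume q: "q \<in> {2..<p}"
  define q' where "q' = (q + p) / 2"
  have q': "q' \<in> {2..<p}" "q < q'" using q unfolding q'_def by auto
  assume "\<forall>q\<in>{2..<p}. \<exists>C>0. \<forall>A\<in>sets M. ennpow (emeasure M A) (1 / q) \<le> ennreal C * Cap M E A"
  then obtain C where "0 < C" "\<forall>A\<in>sets M. ennpow (emeasure M A) (1 / q') \<le> ennreal C * Cap M E A"
    using q'(1) by blast
  then show "\<exists>K>0. \<forall>f\<in>dirichlet_space M E. Lqnorm M q f \<le> ennreal K * Dnorm M E f"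
    using q q'(2) by (intro Lq_embedding_if_Cap_bound[OF dir even qc]) auto
qed

end
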